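(* Fix $T>0$ and $L>0$. For $t\in[0,T]$ and $x,y\in[-L,L]$ let $H_L^D(t;x,y)=\Gamma(t,x-y)-\Gamma_L^D(t;x,y)$. Then $H_L^D(t;x,y)>0$ and $$\int_{-L}^Ldy\,H_L^D(t;x,y)\le K_{t,x,L}\left[e^{-\frac{(L-x)^2}{4t}}+e^{-\frac{(L+x)^2}{4t}}\right],$$ $$\int_0^tds\int_{-L}^Ldy\,H_L^D(s;x,y)\le t\,K_{t,x,L}\left[e^{-\frac{(L-x)^2}{4t}}+e^{-\frac{(L+x)^2}{4t}}\right],$$ $$\int_0^tds\int_{-L}^Ldy\,[H_L^D(s;x,y)]^2\le\sqrt{\tfrac{t}{\pi}}\,K_{t,x,L}\left[e^{-\frac{(L-x)^2}{4t}}+e^{-\frac{(L+x)^2}{4t}}\right]^2.$$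
   Context: $\Gamma(t,x)=(4\pi t)^{-1/2}\exp(-x^2/(4t))$ for $t>0$. $\Gamma_L^D(t;x,y)=\sum_{m\in\mathbb Z}[\Gamma(t,x-y+4mL)-\Gamma(t,x+y+(4m+2)L)]$ (equivalently $\frac1L\sum_{n\ge1}e^{-\pi^2n^2t/(4L^2)}\sin(\frac{n\pi}{2L}(x+L))\sin(\frac{n\pi}{2L}(y+L))$) is the Green's function of $\partial_t-\partial_x^2$ on $[-L,L]$ with vanishing Dirichlet boundary conditions. $K_{t,x,L}=\min\left(\frac12,\sqrt{t/\pi}\,\max\left(\frac1{L-x},\frac1{L+x}\right)\right)$. *)

theory Defs
  imports "HOL-Analysis.Analysis"
begin

definition heatGamma :: "real \<Rightarrow> real \<Rightarrow> real" where
  "heatGamma t x = (4 * pi * t) powr (-1/2) * exp (- (x^2) / (4 * t))"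

text \<open>Dirichlet Green's function on [-L,L], given by the method of images
  (sum over all integers m).\<close>
definition GammaD :: "real \<Rightarrow> real \<Rightarrow> real \<Rightarrow> real \<Rightarrow> real" where
  "GammaD L t x y =
     (\<Sum>\<^sub>\<infinity> m :: int. heatGamma t (x - y + 4 * of_int m * L)
                     - heatGamma t (x + y + (4 * of_int m + 2) * L))"

definition HD :: "real \<Rightarrow> real \<Rightarrow> real \<Rightarrow> real \<Rightarrow> real" where
  "HD L t x y = heatGamma t (x - y) - GammaD L t x y"

text \<open>K_{t,x,L}; at x = L or x = -L one of the quotients 1/(L -+ x) is +infinity,
  so the max is +infinity and K = 1/2.\<close>
definition Kconst :: "real \<Rightarrow> real \<Rightarrow> real \<Rightarrow> real" where
  "Kconst t x L =
     (if x = L \<or> x = - L then 1/2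
      else min (1/2) (sqrt (t / pi) * max (1 / (L - x)) (1 / (L + x))))"

end

theory Submission
  imports Defs "HOL-Probability.Probability"
begin

text \<open>By the method of images, \<open>HD\<close> is the total mass of the reflected images (sinks)
  \<open>\<Gamma>(t, x + y + (4m + 2)L)\<close> minus that of the direct images (sources) \<open>\<Gamma>(t, x - y + 4mL)\<close>
  with \<open>m \<noteq> 0\<close>. Matching every sink with a source of larger absolute argument gives
  \<open>HD > 0\<close>; matching every sink but the two nearest ones with a source of smaller absolute
  argument gives \<open>HD \<le> \<Gamma>(t, 2L - x - y) + \<Gamma>(t, 2L + x + y)\<close>. The \<open>y\<close>-integral of each
  nearest image is a Gaussian tail beyond the distance \<open>a = L \<mp> x\<close> to the boundary, which is
  at most \<open>exp (-a^2/4t)\<close> times both half the mass and the Mills ratio \<open>sqrt (t/pi) / a\<close>;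
  this is where \<open>K\<close> comes from. For the square, one factor \<open>HD\<close> is bounded by its supremum
  \<open>E \<Gamma>(t, 0)\<close>. The time integrals follow from monotonicity in \<open>t\<close> and
  \<open>\<integral>\<^sub>0\<^sup>t \<Gamma>(s, 0) ds = sqrt (t/pi)\<close>.\<close>

section \<open>The heat kernel\<close>

lemma heatGamma_eq:
  assumes "0 < t"
  shows "heatGamma t w = exp (- (w^2) / (4 * t)) / sqrt (4 * pi * t)"
  using assms by (simp add: heatGamma_def powr_minus_divide powr_half_sqrt)

lemma heatGamma_zero_time [simp]: "heatGamma 0 w = 0"
  by (simp add: heatGamma_def)

lemma heatGamma_nonneg: "0 \<le> heatGamma t w"
  by (simp add: heatGamma_def)

lemma heatGamma_minus [simp]: "heatGamma t (- w) = heatGamma t w"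
  by (simp add: heatGamma_def)

lemma heatGamma_eq_exp_mult_peak: "heatGamma t w = exp (- (w^2) / (4 * t)) * heatGamma t 0"
  by (simp add: heatGamma_def)

lemma heatGamma_le_iff:
  assumes "0 < t"
  shows "heatGamma t v \<le> heatGamma t w \<longleftrightarrow> \<bar>w\<bar> \<le> \<bar>v\<bar>"
proof -
  have "\<not> pi * t < 0"
    using assms by (simp add: not_less)
  then show ?thesis
    using assms by (simp add: heatGamma_eq divide_le_cancel abs_le_square_iff)
qed

lemma heatGamma_less_iff:
  assumes "0 < t"
  shows "heatGamma t v < heatGamma t w \<longleftrightarrow> \<bar>w\<bar> < \<bar>v\<bar>"
  using heatGamma_le_iff[OF assms, of w v] by linarith

lemma heatGamma_add_le:
  assumes "0 < t" "0 \<le> a * b"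
  shows "heatGamma t (a + b) \<le> exp (- (a^2) / (4 * t)) * heatGamma t b"
proof -
  have "- ((a + b)^2) / (4 * t) \<le> - (a^2) / (4 * t) + - (b^2) / (4 * t)"
    using assms mult_nonneg_nonneg[OF assms(2), of t] by (simp add: field_simps power2_sum mult.assoc)
  then show ?thesis
    using assms(1) by (simp add: heatGamma_def mult.left_commute exp_add [symmetric])
qed

lemma continuous_on_heatGamma [continuous_intros]:
  "continuous_on S g \<Longrightarrow> continuous_on S (\<lambda>y. heatGamma t (g y))"
  by (cases "t = 0") (auto simp: heatGamma_def intro!: continuous_intros)

lemma heatGamma_has_real_derivative:
  assumes "0 < t"
  shows "(heatGamma t has_real_derivative (- w / (2 * t) * heatGamma t w)) (at w)"
proof -
  have "((\<lambda>w. (4 * pi * t) powr (-1/2) * exp (- (w^2) / (4 * t))) has_real_derivative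
      (4 * pi * t) powr (-1/2) * (exp (- (w^2) / (4 * t)) * (- (2 * w) / (4 * t)))) (at w)"
    by (intro DERIV_cmult DERIV_fun_exp derivative_eq_intros) (use assms in auto)
  then show ?thesis
    using assms unfolding heatGamma_def by (simp add: field_simps)
qed

lemma summable_on_int_power_abs:
  fixes r :: real
  assumes "0 \<le> r" "r < 1"
  shows "(\<lambda>m::int. r ^ nat \<bar>m\<bar>) summable_on UNIV"
proof -
  have geometric: "(\<lambda>n::nat. r ^ n) summable_on UNIV"
    using assms by (simp add: summable_on_UNIV_nonneg_real_iff summable_geometric)
  have half: "(\<lambda>m::int. r ^ nat \<bar>m\<bar>) summable_on range f"
    if "inj f" "\<And>n. nat \<bar>f n\<bar> = n" for f :: "nat \<Rightarrow> int"
    using that geometric by (subst summable_on_reindex) (auto simp: o_def)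
  have "m \<in> range int \<union> range (\<lambda>n. - int n)" for m :: int
    by (cases m rule: int_cases2) auto
  then have "range int \<union> range (\<lambda>n. - int n) = UNIV"
    by blast
  then show ?thesis
    using summable_on_union[OF half half, of int "\<lambda>n. - int n"] by (auto simp: inj_def)
qed

lemma heatGamma_lattice_le_geometric:
  assumes "0 < t"
  shows "heatGamma t (c + k * of_int m)
    \<le> exp (c^2 / (4 * t)) / sqrt (4 * pi * t) * exp (- (k^2) / (8 * t)) ^ nat \<bar>m\<bar>"
proof -
  define n where "n = real (nat \<bar>m\<bar>)"
  have "\<bar>m\<bar> \<le> m^2"
  proof (cases "m = 0")
    case False
    then have "\<bar>m\<bar> * 1 \<le> \<bar>m\<bar> * \<bar>m\<bar>"
      by (intro mult_left_mono) auto
    then show ?thesis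
      by (simp add: power2_eq_square)
  qed simp
  then have "of_int \<bar>m\<bar> \<le> (of_int (m^2) :: real)"
    by (simp only: of_int_le_iff)
  then have "n \<le> (of_int m)^2"
    by (simp add: n_def)
  then have "k^2 * n \<le> (k * of_int m)^2"
    by (simp add: power_mult_distrib mult_left_mono)
  also have "\<dots> \<le> 2 * (c + k * of_int m)^2 + 2 * c^2"
    using zero_le_power2[of "2 * c + k * of_int m"] by (simp add: power2_eq_square algebra_simps)
  finally have "- ((c + k * of_int m)^2) / (4 * t) \<le> c^2 / (4 * t) + n * (- (k^2) / (8 * t))"
    using assms by (simp add: field_simps)
  then have "exp (- ((c + k * of_int m)^2) / (4 * t))
      \<le> exp (c^2 / (4 * t)) * exp (- (k^2) / (8 * t)) ^ nat \<bar>m\<bar>"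
    by (simp add: n_def exp_add [symmetric] exp_of_nat_mult [symmetric])
  then show ?thesis
    using assms by (simp add: heatGamma_eq divide_right_mono)
qed

lemma summable_on_heatGamma_lattice:
  assumes "0 < t" "k \<noteq> 0"
  shows "(\<lambda>m::int. heatGamma t (c + k * of_int m)) summable_on A"
proof -
  have "(\<lambda>m::int. exp (c^2 / (4 * t)) / sqrt (4 * pi * t) * exp (- (k^2) / (8 * t)) ^ nat \<bar>m\<bar>)
      summable_on UNIV"
    using assms by (intro summable_on_cmult_right summable_on_int_power_abs) auto
  then have "(\<lambda>m::int. heatGamma t (c + k * of_int m)) summable_on UNIV"
    by (rule summable_on_comparison_test)
      (use assms heatGamma_lattice_le_geometric heatGamma_nonneg in blast)+
  then show ?thesis
    by (rule summable_on_subset) simp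
qed

section \<open>Method of images\<close>

locale dirichlet_images =
  fixes L t x y :: real
  assumes t_pos: "0 < t" and L_pos: "0 < L"
    and x_bounds: "-L \<le> x" "x \<le> L" and y_bounds: "-L \<le> y" "y \<le> L"
begin

definition source :: "int \<Rightarrow> real" where
  "source m = heatGamma t (x - y + 4 * of_int m * L)"

definition sink :: "int \<Rightarrow> real" where
  "sink m = heatGamma t (x + y + (4 * of_int m + 2) * L)"

lemma summable_source: "source summable_on A"
proof -
  have "source = (\<lambda>m. heatGamma t ((x - y) + (4 * L) * of_int m))"
    by (rule ext) (simp add: source_def algebra_simps)
  then show ?thesis
    using summable_on_heatGamma_lattice[OF t_pos] L_pos by simp
qed

lemma summable_sink: "sink summable_on A"
proof -
  have "sink = (\<lambda>m. heatGamma t ((x + y + 2 * L) + (4 * L) * of_int m))"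
    by (rule ext) (simp add: sink_def algebra_simps)
  then show ?thesis
    using summable_on_heatGamma_lattice[OF t_pos] L_pos by simp
qed

lemma HD_eq_sinks_minus_sources: "HD L t x y = (\<Sum>\<^sub>\<infinity>m. sink m) - (\<Sum>\<^sub>\<infinity>m\<in>-{0}. source m)"
proof -
  have "GammaD L t x y = (\<Sum>\<^sub>\<infinity>m. source m + - sink m)"
    by (simp add: GammaD_def source_def sink_def)
  also have "\<dots> = (\<Sum>\<^sub>\<infinity>m. source m) - (\<Sum>\<^sub>\<infinity>m. sink m)"
    using infsum_add[OF summable_source summable_on_uminus[THEN iffD2, OF summable_sink]]
    by (simp add: infsum_uminus)
  also have "(\<Sum>\<^sub>\<infinity>m. source m) = source 0 + (\<Sum>\<^sub>\<infinity>m\<in>-{0}. source m)"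
  proof -
    have "insert 0 (-{0}) = (UNIV :: int set)"
      by auto
    then show ?thesis
      using infsum_insert[OF summable_source, of 0 "-{0}"] by simp
  qed
  finally show ?thesis
    by (simp add: HD_def source_def)
qed

lemma source_sink_eq:
  "source (m + 1) = heatGamma t (x - y + 4 * (of_int m * L) + 4 * L)"
  "source m = heatGamma t (x - y + 4 * (of_int m * L))"
  "sink m = heatGamma t (x + y + 4 * (of_int m * L) + 2 * L)"
  by (simp_all add: source_def sink_def algebra_simps)

lemma source_le_sink: "source (if 0 \<le> m then m + 1 else m) \<le> sink m"
proof (cases "0 \<le> m")
  case True
  then have "0 \<le> of_int m * L"
    using L_pos by simp
  then show ?thesis
    using True x_bounds y_bounds L_pos
    unfolding if_P[OF True] source_sink_eq(1,3) heatGamma_le_iff[OF t_pos] by linarith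
next
  case False
  then have "of_int m * L \<le> - L"
    using L_pos mult_right_mono[of "of_int m" "-1" L] by simp
  then show ?thesis
    using False x_bounds y_bounds L_pos
    unfolding if_not_P[OF False] source_sink_eq(2,3) heatGamma_le_iff[OF t_pos] by linarith
qed

lemma source_less_sink: "\<exists>m. source (if 0 \<le> m then m + 1 else m) < sink m"
proof (cases "y < L")
  case True
  then have "source 1 < sink 0"
    using x_bounds y_bounds unfolding source_def sink_def heatGamma_less_iff[OF t_pos] by simp
  then show ?thesis
    by (intro exI[of _ 0]) simp
next
  case False
  then have "source (-1) < sink (-1)"
    using x_bounds y_bounds L_pos unfolding source_def sink_def heatGamma_less_iff[OF t_pos] by simp
  then show ?thesis
    by (intro exI[of _ "-1"]) simp
qed

lemma HD_pos: "0 < HD L t x y"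
proof -
  have "((\<lambda>m. source (if 0 \<le> m then m + 1 else m)) has_sum (\<Sum>\<^sub>\<infinity>m\<in>-{0}. source m)) UNIV"
    by (subst has_sum_reindex_bij_witness[where i = "\<lambda>n. if 0 < n then n - 1 else n"
          and j = "\<lambda>m. if 0 \<le> m then m + 1 else m" and T = "-{0}" and h = source])
      (auto simp: summable_source)
  then have "(\<Sum>\<^sub>\<infinity>m\<in>-{0}. source m) < (\<Sum>\<^sub>\<infinity>m. sink m)"
    using source_less_sink source_le_sink
    by (auto intro: has_sum_strict_mono has_sum_infsum summable_sink)
  then show ?thesis
    by (simp add: HD_eq_sinks_minus_sources)
qed

lemma sink_le_source: "m \<notin> {0, -1} \<Longrightarrow> sink m \<le> source (if 0 < m then m else m + 1)"
proof (cases "0 < m")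
  case True
  then have "L \<le> of_int m * L"
    using L_pos mult_right_mono[of 1 "of_int m" L] by simp
  then show ?thesis
    using True x_bounds y_bounds L_pos
    unfolding if_P[OF True] source_sink_eq(2,3) heatGamma_le_iff[OF t_pos] by linarith
next
  case False
  moreover assume "m \<notin> {0, -1}"
  ultimately have "of_int m * L \<le> - 2 * L"
    using L_pos mult_right_mono[of "of_int m" "-2" L] by simp
  then show ?thesis
    using False x_bounds y_bounds L_pos
    unfolding if_not_P[OF False] source_sink_eq(1,3) heatGamma_le_iff[OF t_pos] by linarith
qed

lemma HD_le_nearest_images: "HD L t x y \<le> heatGamma t (2*L - x - y) + heatGamma t (2*L + x + y)"
proof -
  have "((\<lambda>m. source (if 0 < m then m else m + 1)) has_sum (\<Sum>\<^sub>\<infinity>m\<in>-{0}. source m)) (-{0, -1})"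
    by (subst has_sum_reindex_bij_witness[where i = "\<lambda>n. if 0 < n then n else n - 1"
          and j = "\<lambda>m. if 0 < m then m else m + 1" and T = "-{0}" and h = source])
      (auto simp: summable_source)
  then have "(\<Sum>\<^sub>\<infinity>m\<in>-{0, -1}. sink m) \<le> (\<Sum>\<^sub>\<infinity>m\<in>-{0}. source m)"
    using sink_le_source by (auto intro: has_sum_mono has_sum_infsum summable_sink)
  moreover have "(\<Sum>\<^sub>\<infinity>m. sink m) = sink 0 + sink (-1) + (\<Sum>\<^sub>\<infinity>m\<in>-{0, -1}. sink m)"
  proof -
    have "insert 0 (insert (-1) (-{0, -1})) = (UNIV :: int set)"
      by auto
    then show ?thesis
      using infsum_insert[OF summable_sink, of 0 "insert (-1) (-{0, -1})"]
        infsum_insert[OF summable_sink, of "-1" "-{0, -1}"] by simp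
  qed
  moreover have "sink 0 = heatGamma t (2*L + x + y)" "sink (-1) = heatGamma t (2*L - x - y)"
    using heatGamma_minus[of t "2*L - x - y"] by (simp_all add: sink_def algebra_simps)
  ultimately show ?thesis
    by (simp add: HD_eq_sinks_minus_sources)
qed

end

section \<open>Gaussian tails\<close>

text \<open>No integrability of \<open>f\<close> is needed: a non-integrable function has integral 0.\<close>

lemma integral_le_dominating:
  fixes f g :: "'a::euclidean_space \<Rightarrow> real"
  assumes "g integrable_on S" "\<And>x. x \<in> S \<Longrightarrow> f x \<le> g x" "\<And>x. x \<in> S \<Longrightarrow> 0 \<le> g x"
  shows "integral S f \<le> integral S g"
proof (cases "f integrable_on S")
  case True
  then show ?thesis using assms by (intro integral_le)
next
  case False
  then show ?thesis using assms by (simp add: not_integrable_integral integral_nonneg)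
qed

lemma integral_reflect_shift_real:
  fixes f :: "real \<Rightarrow> real"
  shows "integral {a..b} (\<lambda>y. f (c - y)) = integral {c - b..c - a} f"
proof -
  have "integral {a..b} (\<lambda>y. f (c - y)) = integral {-b..-a} (\<lambda>y. f (y + c))"
    using Henstock_Kurzweil_Integration.integral_reflect_real[of "-a" "-b" "\<lambda>y. f (y + c)"] by simp
  also have "\<dots> = integral {c - b..c - a} f"
    using integral_shift_real_ivl[of "c - b" c "c - a" f] by simp
  finally show ?thesis .
qed

lemma heatGamma_eq_normal_density:
  assumes "0 < t"
  shows "heatGamma t = normal_density 0 (sqrt (2 * t))"
  using assms by (auto simp: fun_eq_iff heatGamma_eq normal_density_def)

lemma integral_heatGamma_half_line_le:
  assumes "0 < t" "0 \<le> c"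
  shows "integral {0..c} (heatGamma t) \<le> 1/2"
proof -
  have int: "heatGamma t integrable_on S" if "S = {u..v}" for S u v
    using that by (auto intro!: integrable_continuous_interval continuous_intros)
  have "integral {-c..0} (heatGamma t) = integral {0..c} (heatGamma t)"
    using Henstock_Kurzweil_Integration.integral_reflect_real[of c 0 "heatGamma t"] by simp
  moreover have "integral {-c..0} (heatGamma t) + integral {0..c} (heatGamma t) = integral {-c..c} (heatGamma t)"
    using assms by (intro Henstock_Kurzweil_Integration.integral_combine) (auto intro: int)
  ultimately have "2 * integral {0..c} (heatGamma t) = integral {-c..c} (heatGamma t)"
    by simp
  also have "\<dots> \<le> integral UNIV (heatGamma t)"
    using assms by (intro integral_subset_le int heatGamma_nonneg ballI integrable_on_lborel)
      (auto simp: heatGamma_eq_normal_density)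
  also have "\<dots> = 1"
    using assms by (simp add: heatGamma_eq_normal_density integral_lborel)
  finally show ?thesis by simp
qed

lemma integral_heatGamma_tail_le_half:
  assumes "0 < t" "0 \<le> a" "a \<le> b"
  shows "integral {a..b} (heatGamma t) \<le> 1/2 * exp (- (a^2) / (4 * t))"
proof -
  define e where "e = exp (- (a^2) / (4 * t))"
  have shift: "heatGamma t w \<le> e * heatGamma t (w - a)" if "w \<in> {a..b}" for w
    using heatGamma_add_le[OF assms(1), of a "w - a"] that assms by (simp add: e_def)
  have "integral {a..b} (heatGamma t) \<le> integral {a..b} (\<lambda>w. e * heatGamma t (w - a))"
    using shift by (intro integral_le_dominating)
      (auto intro!: integrable_continuous_interval continuous_intros simp: e_def heatGamma_nonneg)
  also have "\<dots> = e * integral {0..b - a} (heatGamma t)"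
    using integral_shift_real_ivl[of 0 "-a" "b - a" "heatGamma t"] by simp
  also have "\<dots> \<le> e * (1/2)"
    using assms by (intro mult_left_mono integral_heatGamma_half_line_le) (auto simp: e_def)
  finally show ?thesis by (simp add: e_def)
qed

lemma integral_heatGamma_tail_le_Mills:
  assumes "0 < t" "0 < a" "a \<le> b"
  shows "integral {a..b} (heatGamma t) \<le> sqrt (t / pi) / a * exp (- (a^2) / (4 * t))"
proof -
  define F where "F = (\<lambda>w. - (2 * t / a) * heatGamma t w)"
  have FTC: "((\<lambda>w. w / a * heatGamma t w) has_integral F b - F a) {a..b}"
  proof (rule fundamental_theorem_of_calculus_interior)
    show "continuous_on {a..b} F"
      unfolding F_def by (intro continuous_intros)
    show "(F has_vector_derivative w / a * heatGamma t w) (at w)" for w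
      using DERIV_cmult[OF heatGamma_has_real_derivative[OF assms(1)], of "- (2 * t / a)" w] assms
      by (simp add: F_def has_real_derivative_iff_has_vector_derivative [symmetric] field_simps)
  qed (use assms in auto)
  have "integral {a..b} (heatGamma t) \<le> integral {a..b} (\<lambda>w. w / a * heatGamma t w)"
    using FTC assms mult_right_mono[of 1 "w / a" "heatGamma t w" for w]
    by (intro integral_le_dominating) (auto simp: heatGamma_nonneg)
  also have "\<dots> = F b - F a"
    using FTC by (rule integral_unique)
  also have "\<dots> \<le> - F a"
    using assms by (simp add: F_def heatGamma_nonneg)
  also have "- F a = sqrt (t / pi) / a * exp (- (a^2) / (4 * t))"
    using assms by (simp add: F_def heatGamma_eq real_sqrt_mult real_sqrt_divide field_simps)
  finally show ?thesis .
qed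

section \<open>Integrals of the correction\<close>

lemma Kconst_nonneg:
  assumes "0 \<le> s" "-L \<le> x" "x \<le> L"
  shows "0 \<le> Kconst s x L"
  using assms by (auto simp: Kconst_def le_max_iff_disj)

lemma Kconst_mono:
  assumes "0 \<le> s" "s \<le> t" "-L \<le> x" "x \<le> L"
  shows "Kconst s x L \<le> Kconst t x L"
proof (cases "x = L \<or> x = -L")
  case False
  define M where "M = max (1 / (L - x)) (1 / (L + x))"
  have "0 \<le> M"
    using assms False by (auto simp: M_def le_max_iff_disj)
  moreover have "sqrt (s / pi) \<le> sqrt (t / pi)"
    using assms by (simp add: divide_right_mono)
  ultimately have "sqrt (s / pi) * M \<le> sqrt (t / pi) * M"
    by (rule mult_right_mono [rotated])
  then have "min (1/2) (sqrt (s / pi) * M) \<le> min (1/2) (sqrt (t / pi) * M)"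
    by (rule min.mono [OF order_refl])
  then show ?thesis
    using False by (simp add: Kconst_def M_def)
qed (auto simp: Kconst_def)

lemma integral_heatGamma_tail_le_Kconst:
  assumes "0 < s" "-L \<le> x" "x \<le> L" "a = L - x \<or> a = L + x" "a \<le> b"
  shows "integral {a..b} (heatGamma s) \<le> Kconst s x L * exp (- (a^2) / (4 * s))"
proof (cases "x = L \<or> x = -L")
  case True
  then show ?thesis
    using assms integral_heatGamma_tail_le_half[of s a b] by (auto simp: Kconst_def)
next
  case False
  define M where "M = max (1 / (L - x)) (1 / (L + x))"
  define e where "e = exp (- (a^2) / (4 * s))"
  have "0 < a" "1 / a \<le> M"
    using assms False by (auto simp: M_def)
  then have "sqrt (s / pi) * (1 / a) * e \<le> sqrt (s / pi) * M * e"
    by (intro mult_left_mono mult_right_mono) (use assms in \<open>auto simp: e_def\<close>)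
  then have "integral {a..b} (heatGamma s) \<le> min (1/2 * e) (sqrt (s / pi) * M * e)"
    using integral_heatGamma_tail_le_half[of s a b] integral_heatGamma_tail_le_Mills[of s a b]
      \<open>0 < a\<close> assms by (simp add: e_def)
  also have "\<dots> = Kconst s x L * e"
    using False by (simp add: Kconst_def M_def e_def min_mult_distrib_right)
  finally show ?thesis by (simp add: e_def)
qed

definition boundary_weight :: "real \<Rightarrow> real \<Rightarrow> real \<Rightarrow> real" where
  "boundary_weight L t x = exp (- ((L - x)^2) / (4 * t)) + exp (- ((L + x)^2) / (4 * t))"

lemma boundary_weight_nonneg: "0 \<le> boundary_weight L t x"
  by (simp add: boundary_weight_def)

lemma boundary_weight_mono:
  assumes "0 < s" "s \<le> t"
  shows "boundary_weight L s x \<le> boundary_weight L t x"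
proof -
  have "exp (- (a^2) / (4 * s)) \<le> exp (- (a^2) / (4 * t))" for a
    using assms by (simp add: divide_left_mono)
  then show ?thesis
    by (simp add: boundary_weight_def add_mono)
qed

lemma integral_nearest_images_le:
  assumes "0 < s" "-L \<le> x" "x \<le> L"
  shows "integral {-L..L} (\<lambda>y. heatGamma s (2*L - x - y) + heatGamma s (2*L + x + y))
    \<le> Kconst s x L * boundary_weight L s x"
proof -
  have "integral {-L..L} (\<lambda>y. heatGamma s (2*L - x - y)) = integral {L - x..3*L - x} (heatGamma s)"
    using integral_reflect_shift_real[of "-L" L "heatGamma s" "2*L - x"] by (simp add: algebra_simps)
  moreover have "integral {-L..L} (\<lambda>y. heatGamma s (2*L + x + y)) = integral {L + x..3*L + x} (heatGamma s)"
    using Henstock_Kurzweil_Integration.integral_reflect_real[of L "-L" "\<lambda>y. heatGamma s (2*L + x + y)"]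
      integral_reflect_shift_real[of "-L" L "heatGamma s" "2*L + x"]
    by (simp add: algebra_simps)
  ultimately show ?thesis
    using assms integral_heatGamma_tail_le_Kconst[of s L x "L - x" "3*L - x"]
      integral_heatGamma_tail_le_Kconst[of s L x "L + x" "3*L + x"]
    by (simp add: integral_add integrable_continuous_interval continuous_intros
        boundary_weight_def distrib_left)
qed

lemma nearest_images_le_boundary_weight:
  assumes "0 < s" "-L \<le> x" "x \<le> L" "-L \<le> y" "y \<le> L"
  shows "heatGamma s (2*L - x - y) + heatGamma s (2*L + x + y) \<le> boundary_weight L s x * heatGamma s 0"
proof -
  have "heatGamma s (2*L - x - y) \<le> heatGamma s (L - x)" "heatGamma s (2*L + x + y) \<le> heatGamma s (L + x)"
    using assms by (simp_all add: heatGamma_le_iff)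
  then show ?thesis
    using heatGamma_eq_exp_mult_peak[of s "L - x"] heatGamma_eq_exp_mult_peak[of s "L + x"]
    by (simp add: boundary_weight_def distrib_right)
qed

text \<open>Since \<open>0 powr _ = 0\<close>, the kernel vanishes at time 0, so the integrands of the
  time integrals are harmless at \<open>s = 0\<close>.\<close>

lemma HD_zero_time [simp]: "HD L 0 x y = 0"
  by (simp add: HD_def GammaD_def)

lemma integral_HD_le:
  assumes "0 \<le> s" "s \<le> t" "0 < L" "-L \<le> x" "x \<le> L"
  shows "integral {-L..L} (\<lambda>y. HD L s x y) \<le> Kconst t x L * boundary_weight L t x"
proof (cases "s = 0")
  case True
  then show ?thesis
    using assms by (simp add: Kconst_nonneg boundary_weight_nonneg)
next
  case False
  then have "0 < s"
    using assms by simp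
  have "integral {-L..L} (\<lambda>y. HD L s x y)
      \<le> integral {-L..L} (\<lambda>y. heatGamma s (2*L - x - y) + heatGamma s (2*L + x + y))"
  proof (rule integral_le_dominating)
    show "HD L s x y \<le> heatGamma s (2*L - x - y) + heatGamma s (2*L + x + y)" if "y \<in> {-L..L}" for y
      using \<open>0 < s\<close> assms that
      by (intro dirichlet_images.HD_le_nearest_images dirichlet_images.intro) auto
  qed (auto intro!: integrable_continuous_interval continuous_intros heatGamma_nonneg add_nonneg_nonneg)
  also have "\<dots> \<le> Kconst s x L * boundary_weight L s x"
    using \<open>0 < s\<close> assms by (intro integral_nearest_images_le)
  also have "\<dots> \<le> Kconst t x L * boundary_weight L t x"
    using \<open>0 < s\<close> assms
    by (intro mult_mono Kconst_mono boundary_weight_mono Kconst_nonneg boundary_weight_nonneg) auto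
  finally show ?thesis .
qed

lemma integral_HD_squared_le:
  assumes "0 \<le> s" "s \<le> t" "0 < L" "-L \<le> x" "x \<le> L"
  shows "integral {-L..L} (\<lambda>y. (HD L s x y)^2)
    \<le> Kconst t x L * (boundary_weight L t x)^2 * heatGamma s 0"
proof (cases "s = 0")
  case True
  then show ?thesis
    by simp
next
  case False
  then have "0 < s"
    using assms by simp
  define W where "W = boundary_weight L s x * heatGamma s 0"
  have "0 \<le> W"
    by (simp add: W_def boundary_weight_nonneg heatGamma_nonneg)
  have "integral {-L..L} (\<lambda>y. (HD L s x y)^2)
      \<le> integral {-L..L} (\<lambda>y. W * (heatGamma s (2*L - x - y) + heatGamma s (2*L + x + y)))"
  proof (rule integral_le_dominating)
    fix y assume "y \<in> {-L..L}"
    then interpret dirichlet_images L s x y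
      using \<open>0 < s\<close> assms by unfold_locales auto
    have "HD L s x y * HD L s x y \<le> W * (heatGamma s (2*L - x - y) + heatGamma s (2*L + x + y))"
      using HD_pos HD_le_nearest_images nearest_images_le_boundary_weight[OF t_pos x_bounds y_bounds]
      by (intro mult_mono) (auto simp: W_def)
    then show "(HD L s x y)^2 \<le> W * (heatGamma s (2*L - x - y) + heatGamma s (2*L + x + y))"
      by (simp add: power2_eq_square)
  qed (use \<open>0 \<le> W\<close> in \<open>auto intro!: integrable_continuous_interval continuous_intros
      mult_nonneg_nonneg add_nonneg_nonneg heatGamma_nonneg\<close>)
  also have "\<dots> = W * integral {-L..L} (\<lambda>y. heatGamma s (2*L - x - y) + heatGamma s (2*L + x + y))"
    by simp
  also have "\<dots> \<le> W * (Kconst s x L * boundary_weight L s x)"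
    using \<open>0 < s\<close> \<open>0 \<le> W\<close> assms by (intro mult_left_mono integral_nearest_images_le)
  also have "\<dots> = Kconst s x L * (boundary_weight L s x)^2 * heatGamma s 0"
    by (simp add: W_def power2_eq_square)
  also have "\<dots> \<le> Kconst t x L * (boundary_weight L t x)^2 * heatGamma s 0"
    using \<open>0 < s\<close> assms
    by (intro mult_mono power_mono Kconst_mono boundary_weight_mono Kconst_nonneg boundary_weight_nonneg
        heatGamma_nonneg zero_le_power mult_nonneg_nonneg) auto
  finally show ?thesis .
qed

lemma has_integral_heatGamma_peak:
  assumes "0 \<le> t"
  shows "((\<lambda>s. heatGamma s 0) has_integral sqrt (t / pi)) {0..t}"
proof -
  have "((\<lambda>s. heatGamma s 0) has_integral sqrt (t / pi) - sqrt (0 / pi)) {0..t}"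
  proof (rule fundamental_theorem_of_calculus_interior)
    show "((\<lambda>s. sqrt (s / pi)) has_vector_derivative heatGamma s 0) (at s)" if "s \<in> {0<..<t}" for s
    proof -
      have "((\<lambda>s. sqrt (s / pi)) has_real_derivative inverse (sqrt (s / pi)) / 2 * (1 / pi)) (at s)"
        by (rule DERIV_chain2[OF DERIV_real_sqrt]) (use that in \<open>auto intro!: derivative_eq_intros\<close>)
      moreover have "inverse (sqrt (s / pi)) / 2 * (1 / pi) = heatGamma s 0"
        using that by (simp add: heatGamma_eq real_sqrt_mult real_sqrt_divide field_simps)
      ultimately show ?thesis
        by (simp add: has_real_derivative_iff_has_vector_derivative)
    qed
  qed (use assms in \<open>auto intro!: continuous_intros\<close>)
  then show ?thesis
    by simp
qed

theorem lemma5p2: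
  fixes T L t x y :: real
  assumes "T > 0" and "L > 0"
    and "0 < t" and "t \<le> T"
    and "-L \<le> x" and "x \<le> L" and "-L \<le> y" and "y \<le> L"
  defines "E \<equiv> exp (- ((L - x)^2) / (4 * t)) + exp (- ((L + x)^2) / (4 * t))"
  shows "HD L t x y > 0
    \<and> integral {-L..L} (\<lambda>y. HD L t x y) \<le> Kconst t x L * E
    \<and> integral {0..t} (\<lambda>s. integral {-L..L} (\<lambda>y. HD L s x y))
           \<le> t * Kconst t x L * E
    \<and> integral {0..t} (\<lambda>s. integral {-L..L} (\<lambda>y. (HD L s x y)^2))
           \<le> sqrt (t / pi) * Kconst t x L * E^2"
proof -
  note bounds = \<open>L > 0\<close> \<open>0 < t\<close> \<open>-L \<le> x\<close> \<open>x \<le> L\<close> \<open>-L \<le> y\<close> \<open>y \<le> L\<close>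
  have E: "E = boundary_weight L t x"
    by (simp add: E_def boundary_weight_def)
  have K: "0 \<le> Kconst t x L"
    using bounds by (simp add: Kconst_nonneg)
  have peak: "((\<lambda>s. heatGamma s 0) has_integral sqrt (t / pi)) {0..t}"
    using bounds by (simp add: has_integral_heatGamma_peak)
  have "0 < HD L t x y"
    using bounds by (intro dirichlet_images.HD_pos dirichlet_images.intro)
  moreover have "integral {-L..L} (\<lambda>y. HD L t x y) \<le> Kconst t x L * E"
    using bounds by (simp add: E integral_HD_le)
  moreover have "integral {0..t} (\<lambda>s. integral {-L..L} (\<lambda>y. HD L s x y))
      \<le> integral {0..t} (\<lambda>s. Kconst t x L * E)"
    using bounds K
    by (intro integral_le_dominating) (auto simp: E integral_HD_le boundary_weight_nonneg)
  moreover have "integral {0..t} (\<lambda>s. integral {-L..L} (\<lambda>y. (HD L s x y)^2))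
      \<le> integral {0..t} (\<lambda>s. Kconst t x L * E^2 * heatGamma s 0)"
    using bounds K
    by (intro integral_le_dominating has_integral_integrable[OF has_integral_mult_right[OF peak]])
      (auto simp: E integral_HD_squared_le heatGamma_nonneg)
  ultimately show ?thesis
    using bounds integral_unique[OF peak] by (simp add: mult_ac)
qed

end
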